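(* For every partition $\lambda$ with at most $n$ parts, $$V^*_\lambda=\mathrm{Span}_{\mathbb{Q}(q,t)}\{E^*_\mu:\mu\in S_n(\lambda)\},$$ where $S_n(\lambda)$ is the set of rearrangements of $\lambda$.
   Context: Polynomials are in $x_1,\dots,x_n$ over $\mathbb{Q}(q,t)$; $\mathcal{P}_n^{(d)}$ denotes polynomials of degree at most $d$. For $\mu\in\mathbb{N}^n$ let $k_i(\mu)=\#\{j<i:\mu_j>\mu_i\}+\#\{j>i:\mu_j\ge\mu_i\}$ and $\widetilde\mu=(q^{\mu_1}t^{-k_1(\mu)},\dots,q^{\mu_n}t^{-k_n(\mu)})$. For $\mu\in\mathbb{N}^n$ with $|\mu|=d$, $E^*_\mu$ is the unique polynomial in $\mathcal{P}_n^{(d)}$ whose coefficient of $x^\mu$ is $1$ and with $E^*_\mu(\widetilde\nu)=0$ for all $\nu\in\mathbb{N}^n$, $|\nu|\le d$, $\nu\ne\mu$. For a partition $\lambda$ of size $d$, $V^*_\lambda=\{f\in\mathcal{P}_n^{(d)}: f(\widetilde\nu)=0 \text{ for all } \nu\in\mathbb{N}^n \text{ with } |\nu|\le|\lambda| \text{ and } \nu\notin S_n(\lambda)\}$. *)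

theory Defs
  imports Main "HOL-Library.Function_Algebras" "HOL-Computational_Algebra.Polynomial" "HOL-Computational_Algebra.Fraction_Field"
begin

text \<open>The field Q(q,t) = fraction field of Q[t][q].\<close>
type_synonym K = "rat poly poly fract"

definition qq :: K where "qq = Fract [:0, 1:] 1"
definition tt :: K where "tt = Fract [:[:0, 1:]:] 1"

text \<open>Compositions (exponent vectors) of length n, polynomials in x_1..x_n as
coefficient functions on exponent vectors (lists of length n).\<close>
definition comps :: "nat \<Rightarrow> nat \<Rightarrow> nat list set" where
  "comps n d = {\<mu>. length \<mu> = n \<and> sum_list \<mu> \<le> d}"

definition polys :: "nat \<Rightarrow> nat \<Rightarrow> (nat list \<Rightarrow> K) set" where
  "polys n d = {f. \<forall>\<mu>. f \<mu> \<noteq> 0 \<longrightarrow> \<mu> \<in> comps n d}"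

definition peval :: "nat \<Rightarrow> nat \<Rightarrow> (nat list \<Rightarrow> K) \<Rightarrow> K list \<Rightarrow> K" where
  "peval n d f x = (\<Sum>\<mu>\<in>comps n d. f \<mu> * (\<Prod>i<n. (x ! i) ^ (\<mu> ! i)))"

text \<open>k_i(mu) (0-based index i) and the point tilde mu.\<close>
definition kk :: "nat \<Rightarrow> nat list \<Rightarrow> nat \<Rightarrow> nat" where
  "kk n \<mu> i = card {j. j < i \<and> \<mu> ! j > \<mu> ! i} + card {j. i < j \<and> j < n \<and> \<mu> ! j \<ge> \<mu> ! i}"

definition tilde :: "nat \<Rightarrow> nat list \<Rightarrow> K list" where
  "tilde n \<mu> = map (\<lambda>i. qq ^ (\<mu> ! i) * (inverse tt) ^ (kk n \<mu> i)) [0..<n]"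

definition Estar :: "nat \<Rightarrow> nat list \<Rightarrow> (nat list \<Rightarrow> K)" where
  "Estar n \<mu> = (THE f. f \<in> polys n (sum_list \<mu>) \<and> f \<mu> = 1 \<and>
      (\<forall>\<nu>. length \<nu> = n \<and> sum_list \<nu> \<le> sum_list \<mu> \<and> \<nu> \<noteq> \<mu>
            \<longrightarrow> peval n (sum_list \<mu>) f (tilde n \<nu>) = 0))"

text \<open>Partitions with at most n parts, padded by zeros to length n.\<close>
definition is_partition :: "nat \<Rightarrow> nat list \<Rightarrow> bool" where
  "is_partition n lam \<longleftrightarrow> length lam = n \<and> sorted (rev lam)"

definition rearr :: "nat list \<Rightarrow> nat list set" where
  "rearr lam = {\<mu>. mset \<mu> = mset lam}"

definition Vstar :: "nat \<Rightarrow> nat list \<Rightarrow> (nat list \<Rightarrow> K) set" where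
  "Vstar n lam = {f \<in> polys n (sum_list lam).
      \<forall>\<nu>. length \<nu> = n \<and> sum_list \<nu> \<le> sum_list lam \<and> \<nu> \<notin> rearr lam
            \<longrightarrow> peval n (sum_list lam) f (tilde n \<nu>) = 0}"

definition pscale :: "K \<Rightarrow> (nat list \<Rightarrow> K) \<Rightarrow> (nat list \<Rightarrow> K)" where
  "pscale c f = (\<lambda>\<mu>. c * f \<mu>)"

end

theory Submission
  imports Defs "HOL-Computational_Algebra.Polynomial_Factorial"
begin

(* The key fact is that evaluation at the points tilde nu, nu ranging over a down-closed set D
   of exponent vectors, is injective on polynomials whose monomials lie in D. After clearing
   denominators in Q(q,t) and specializing q := 2, t := 1 (first dividing out common factors so
   that the specialization does not vanish), the points become (2^nu_1, ..., 2^nu_n). There,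
   for a monomial x^mu of maximal degree with nonzero coefficient, the product over the
   coordinates of the mu_i-th divided differences on the grid below mu extracts that
   coefficient, so it is 0.
   For D = all vectors of degree at most d, injectivity plus a dimension count yields
   interpolating polynomials; for D = the same set minus a vector mu of degree d it gives
   uniqueness under the normalization [x^mu] = 1. Hence E*_mu exists, E*_mu(tilde mu) is
   nonzero, and every f in V*_lambda equals the sum of f(tilde mu) / E*_mu(tilde mu) E*_mu over
   the rearrangements mu of lambda, as both sides agree at all points tilde nu. *)

lemma divided_difference_weights:
  fixes c :: "nat \<Rightarrow> 'a::field"
  assumes inj: "inj_on c {..m}"
  shows "\<exists>w. \<forall>k\<le>m. (\<Sum>a\<le>m. w a * c a ^ k) = (if k = m then 1 else 0)"
proof -
  define L where "L a = (\<Prod>b\<in>{..m}-{a}. [:- c b, 1:])" for a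
  define w where "w a = inverse (poly (L a) (c a))" for a
  have L_nodes: "poly (L a) (c j) = 0 \<longleftrightarrow> j \<noteq> a" if "j \<le> m" "a \<le> m" for j a
    using inj that by (auto simp: L_def poly_prod inj_on_def)
  have degree_L: "degree (L a) = m" if "a \<le> m" for a
    using that by (simp add: L_def degree_prod_sum_eq)
  have "lead_coeff (L a) = 1" for a
    unfolding L_def lead_coeff_prod by simp
  then have coeff_L: "coeff (L a) m = 1" if "a \<le> m" for a
    using degree_L[OF that] by metis
  have "(\<Sum>a\<le>m. w a * c a ^ k) = (if k = m then 1 else 0)" if "k \<le> m" for k
  proof -
    define P where "P = (\<Sum>a\<le>m. smult (w a * c a ^ k) (L a))"
    have "P = monom 1 k"
    proof (rule poly_eqI_degree)
      show "poly P x = poly (monom 1 k) x" if "x \<in> c ` {..m}" for x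
      proof -
        obtain j where j: "j \<le> m" "x = c j" using \<open>x \<in> c ` {..m}\<close> by blast
        have "poly P (c j) = (\<Sum>a\<le>m. if a = j then c j ^ k else 0)"
          unfolding P_def poly_sum using j L_nodes by (intro sum.cong) (auto simp: w_def)
        then show ?thesis using j by (simp add: poly_monom)
      qed
      have "degree P \<le> m"
        unfolding P_def
        by (intro degree_sum_le) (auto intro: order.trans[OF degree_smult_le] simp: degree_L)
      then show "degree P < card (c ` {..m})" using inj by (simp add: card_image)
      show "degree (monom (1::'a) k) < card (c ` {..m})"
        using inj \<open>k \<le> m\<close> by (simp add: card_image degree_monom_eq)
    qed
    then have "coeff P m = (if k = m then 1 else 0)" by simp
    moreover have "coeff P m = (\<Sum>a\<le>m. w a * c a ^ k)"
      by (simp add: P_def coeff_sum coeff_L)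
    ultimately show ?thesis by simp
  qed
  then show ?thesis by blast
qed

definition box :: "nat list \<Rightarrow> nat list set" where
  "box \<mu> = {\<nu>. length \<nu> = length \<mu> \<and> (\<forall>i<length \<mu>. \<nu>!i \<le> \<mu>!i)}"

definition lower_set :: "nat list set \<Rightarrow> bool" where
  "lower_set D \<longleftrightarrow> (\<forall>\<mu>\<in>D. box \<mu> \<subseteq> D)"

lemma box_Nil: "box [] = {[]}"
  by (auto simp: box_def)

lemma box_Cons: "box (m # \<mu>) = (\<lambda>(a, \<nu>). a # \<nu>) ` ({..m} \<times> box \<mu>)"
proof (intro equalityI subsetI)
  fix x assume "x \<in> box (m # \<mu>)"
  then obtain a \<nu> where "x = a # \<nu>" "a \<le> m" "\<nu> \<in> box \<mu>"
    by (cases x) (fastforce simp: box_def)+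
  then show "x \<in> (\<lambda>(a, \<nu>). a # \<nu>) ` ({..m} \<times> box \<mu>)" by force
qed (auto simp: box_def nth_Cons split: nat.splits)

lemma sum_box_prod:
  fixes F :: "nat \<Rightarrow> nat \<Rightarrow> 'a::comm_semiring_1"
  shows "(\<Sum>\<nu>\<in>box \<mu>. \<Prod>i<length \<mu>. F i (\<nu>!i)) = (\<Prod>i<length \<mu>. \<Sum>a\<le>\<mu>!i. F i a)"
proof (induction \<mu> arbitrary: F)
  case Nil
  then show ?case by (simp add: box_Nil)
next
  case (Cons m \<mu>)
  have inj: "inj_on (\<lambda>(a, \<nu>). a # \<nu>) ({..m} \<times> box \<mu>)"
    by (auto simp: inj_on_def)
  have "(\<Sum>\<nu>\<in>box (m # \<mu>). \<Prod>i<length (m # \<mu>). F i (\<nu>!i))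
      = (\<Sum>(a, \<nu>)\<in>{..m} \<times> box \<mu>. F 0 a * (\<Prod>i<length \<mu>. F (Suc i) (\<nu>!i)))"
    unfolding box_Cons sum.reindex[OF inj]
    by (simp add: case_prod_beta prod.lessThan_Suc_shift del: prod.lessThan_Suc)
  also have "\<dots> = (\<Sum>a\<le>m. F 0 a) * (\<Sum>\<nu>\<in>box \<mu>. \<Prod>i<length \<mu>. F (Suc i) (\<nu>!i))"
    by (simp add: sum.cartesian_product[symmetric] sum_product)
  also have "\<dots> = (\<Prod>i<length (m # \<mu>). \<Sum>a\<le>(m # \<mu>)!i. F i a)"
    by (simp add: Cons.IH[of "\<lambda>i. F (Suc i)"] prod.lessThan_Suc_shift del: prod.lessThan_Suc)
  finally show ?case .
qed

lemma eq_if_box_sum_list_le: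
  assumes "\<mu> \<in> box \<kappa>" and "sum_list \<kappa> \<le> sum_list \<mu>"
  shows "\<kappa> = \<mu>"
proof (rule ccontr)
  assume "\<kappa> \<noteq> \<mu>"
  moreover have len: "length \<mu> = length \<kappa>" and le: "\<forall>i<length \<kappa>. \<mu>!i \<le> \<kappa>!i"
    using assms(1) by (auto simp: box_def)
  ultimately obtain j where j: "j < length \<kappa>" "\<mu>!j < \<kappa>!j"
    by (metis le le_neq_implies_less nth_equalityI)
  have "(\<Sum>i<length \<kappa>. \<mu>!i) < (\<Sum>i<length \<kappa>. \<kappa>!i)"
    using j le by (intro sum_strict_mono_ex1) auto
  then show False
    using assms(2) len by (simp add: sum_list_sum_nth atLeast0LessThan)
qed

lemma sum_list_le_if_in_box: "\<nu> \<in> box \<mu> \<Longrightarrow> sum_list \<nu> \<le> sum_list \<mu>"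
  unfolding box_def by (auto simp: sum_list_sum_nth atLeast0LessThan intro!: sum_mono)

lemma sum_box_divided_differences:
  fixes c :: "nat \<Rightarrow> 'a::field"
  assumes W: "\<And>m k. k \<le> m \<Longrightarrow> (\<Sum>a\<le>m. W m a * c a ^ k) = (if k = m then 1 else 0)"
    and len: "length \<mu> = n" "length \<kappa> = n" and \<kappa>: "\<kappa> = \<mu> \<or> \<mu> \<notin> box \<kappa>"
  shows "(\<Sum>\<nu>\<in>box \<mu>. \<Prod>i<n. W (\<mu>!i) (\<nu>!i) * c (\<nu>!i) ^ (\<kappa>!i)) = (if \<kappa> = \<mu> then 1 else 0)"
proof -
  have "(\<Sum>\<nu>\<in>box \<mu>. \<Prod>i<n. W (\<mu>!i) (\<nu>!i) * c (\<nu>!i) ^ (\<kappa>!i)) =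
      (\<Prod>i<n. \<Sum>a\<le>\<mu>!i. W (\<mu>!i) a * c a ^ (\<kappa>!i))"
    using sum_box_prod[of "\<lambda>i a. W (\<mu>!i) a * c a ^ (\<kappa>!i)" \<mu>] len by simp
  also have "\<dots> = (if \<kappa> = \<mu> then 1 else 0)"
  proof (cases "\<kappa> = \<mu>")
    case False
    then obtain i where "i < n" "\<kappa>!i < \<mu>!i"
      using len \<kappa> by (auto simp: box_def not_le)
    then have "(\<Sum>a\<le>\<mu>!i. W (\<mu>!i) a * c a ^ (\<kappa>!i)) = 0"
      using W by simp
    then have "(\<Prod>i<n. \<Sum>a\<le>\<mu>!i. W (\<mu>!i) a * c a ^ (\<kappa>!i)) = 0"
      using \<open>i < n\<close> by (intro prod_zero) auto
    then show ?thesis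
      using False by simp
  qed (simp add: W)
  finally show ?thesis .
qed

lemma lower_set_vandermonde_kernel:
  fixes c :: "nat \<Rightarrow> 'a::field" and u :: "nat list \<Rightarrow> 'a"
  assumes inj: "inj c" and fin: "finite D" and lower: "lower_set D"
    and len: "\<forall>\<nu>\<in>D. length \<nu> = n"
    and ker: "\<forall>\<nu>\<in>D. (\<Sum>\<kappa>\<in>D. u \<kappa> * (\<Prod>i<n. c (\<nu>!i) ^ (\<kappa>!i))) = 0"
  shows "\<forall>\<kappa>\<in>D. u \<kappa> = 0"
proof (rule ccontr)
  assume "\<not> (\<forall>\<kappa>\<in>D. u \<kappa> = 0)"
  then obtain \<mu> where \<mu>: "\<mu> \<in> D" "u \<mu> \<noteq> 0"
    and top: "\<And>\<kappa>. \<kappa> \<in> D \<Longrightarrow> u \<kappa> \<noteq> 0 \<Longrightarrow> sum_list \<kappa> \<le> sum_list \<mu>"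
  proof -
    let ?S = "{\<kappa>\<in>D. u \<kappa> \<noteq> 0}"
    have S: "finite ?S" "?S \<noteq> {}"
      using fin \<open>\<not> (\<forall>\<kappa>\<in>D. u \<kappa> = 0)\<close> by auto
    have "Max (sum_list ` ?S) \<in> sum_list ` ?S"
      using S by (intro Max_in) auto
    then obtain \<mu> where "\<mu> \<in> ?S" "sum_list \<mu> = Max (sum_list ` ?S)"
      by auto
    then show thesis
      using that S(1) by (metis (mono_tags, lifting) Max_ge finite_imageI image_eqI mem_Collect_eq)
  qed
  have "\<forall>m. \<exists>w. \<forall>k\<le>m. (\<Sum>a\<le>m. w a * c a ^ k) = (if k = m then 1 else 0)"
    using divided_difference_weights[OF inj_on_subset[OF inj subset_UNIV]] by blast
  then obtain W where W: "\<And>m k. k \<le> m \<Longrightarrow> (\<Sum>a\<le>m. W m a * c a ^ k) = (if k = m then 1 else 0)"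
    by metis
  \<comment> \<open>Apply to the kernel equations the product over the coordinates of the divided differences
    on the nodes below \<open>\<mu>\<close>: it kills every monomial other than \<open>x^\<mu>\<close> that occurs.\<close>
  have "0 = (\<Sum>\<nu>\<in>box \<mu>. (\<Prod>i<n. W (\<mu>!i) (\<nu>!i)) * (\<Sum>\<kappa>\<in>D. u \<kappa> * (\<Prod>i<n. c (\<nu>!i) ^ (\<kappa>!i))))"
    using ker lower \<mu> by (intro sum.neutral[symmetric]) (auto simp: lower_set_def)
  also have "\<dots> = (\<Sum>\<kappa>\<in>D. u \<kappa> * (\<Sum>\<nu>\<in>box \<mu>. \<Prod>i<n. W (\<mu>!i) (\<nu>!i) * c (\<nu>!i) ^ (\<kappa>!i)))"
    by (simp add: sum_distrib_left sum_distrib_right prod.distrib mult_ac sum.swap[of _ "box \<mu>"])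
  also have "\<dots> = (\<Sum>\<kappa>\<in>D. if \<kappa> = \<mu> then u \<mu> else 0)"
  proof (rule sum.cong[OF refl])
    fix \<kappa> assume "\<kappa> \<in> D"
    then have "\<kappa> = \<mu> \<or> \<mu> \<notin> box \<kappa> \<or> u \<kappa> = 0"
      using eq_if_box_sum_list_le top by blast
    then show "u \<kappa> * (\<Sum>\<nu>\<in>box \<mu>. \<Prod>i<n. W (\<mu>!i) (\<nu>!i) * c (\<nu>!i) ^ (\<kappa>!i)) =
        (if \<kappa> = \<mu> then u \<mu> else 0)"
      using sum_box_divided_differences[OF W] len \<mu>(1) \<open>\<kappa> \<in> D\<close> by auto
  qed
  also have "\<dots> = u \<mu>"
    using \<mu> fin by (simp add: sum.delta')
  finally show False
    using \<mu> by simp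
qed

lemma to_fract_power: "to_fract (a ^ k) = to_fract a ^ k"
  by (induction k) simp_all

lemma common_denominator:
  fixes v :: "'k \<Rightarrow> 'a::idom fract"
  assumes "finite D"
  shows "\<exists>e w. e \<noteq> 0 \<and> (\<forall>\<kappa>\<in>D. to_fract e * v \<kappa> = to_fract (w \<kappa>))"
  using assms
proof (induction D rule: finite_induct)
  case empty
  show ?case by (rule exI[of _ 1]) auto
next
  case (insert x D)
  then obtain e w where e: "e \<noteq> 0" and w: "\<forall>\<kappa>\<in>D. to_fract e * v \<kappa> = to_fract (w \<kappa>)"
    by blast
  obtain p q where vx: "v x = Fract p q" and q: "q \<noteq> 0"
    by (cases "v x") auto
  define w' where "w' \<kappa> = (if \<kappa> = x then e * p else q * w \<kappa>)" for \<kappa>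
  have "to_fract (e * q) * v \<kappa> = to_fract (w' \<kappa>)" if "\<kappa> \<in> insert x D" for \<kappa>
  proof (cases "\<kappa> = x")
    case True
    then show ?thesis
      using q by (simp add: vx to_fract_def w'_def eq_fract mult_ac)
  next
    case False
    then have "to_fract (e * q) * v \<kappa> = to_fract q * (to_fract e * v \<kappa>)"
      by (simp add: mult_ac)
    also have "\<dots> = to_fract (w' \<kappa>)"
      using w that False by (simp add: w'_def)
    finally show ?thesis .
  qed
  moreover have "e * q \<noteq> 0"
    using e q by simp
  ultimately show ?case by blast
qed

lemma kernel_vector_nonvanishing_at:
  fixes w :: "'k \<Rightarrow> 'a::idom poly" and A :: "'r \<Rightarrow> 'k \<Rightarrow> 'a poly"
  assumes fin: "finite D" and nz: "\<exists>\<kappa>\<in>D. w \<kappa> \<noteq> 0"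
    and ker: "\<forall>\<nu>\<in>R. (\<Sum>\<kappa>\<in>D. w \<kappa> * A \<nu> \<kappa>) = 0"
  shows "\<exists>w'. (\<exists>\<kappa>\<in>D. poly (w' \<kappa>) a \<noteq> 0) \<and> (\<forall>\<nu>\<in>R. (\<Sum>\<kappa>\<in>D. w' \<kappa> * A \<nu> \<kappa>) = 0)"
proof -
  \<comment> \<open>Divide out the largest power of \<open>x - a\<close> dividing all entries.\<close>
  let ?S = "{\<kappa>\<in>D. w \<kappa> \<noteq> 0}"
  have S: "finite ?S" "?S \<noteq> {}"
    using fin nz by auto
  have "Min (order a ` w ` ?S) \<in> order a ` w ` ?S"
    using S by (intro Min_in) auto
  then obtain \<kappa>0 where \<kappa>0: "\<kappa>0 \<in> D" "w \<kappa>0 \<noteq> 0" "order a (w \<kappa>0) = Min (order a ` w ` ?S)"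
    by auto
  define X where "X = [:- a, 1:] ^ order a (w \<kappa>0)"
  have "\<exists>v. w \<kappa> = X * v" if "\<kappa> \<in> D" for \<kappa>
  proof (cases "w \<kappa> = 0")
    case False
    then have "order a (w \<kappa>) \<in> order a ` w ` ?S"
      using that by (intro imageI) simp
    then have "order a (w \<kappa>0) \<le> order a (w \<kappa>)"
      unfolding \<kappa>0(3) by (rule Min_le[OF finite_imageI[OF finite_imageI[OF S(1)]]])
    then show ?thesis
      unfolding X_def by (metis dvdE order_divides)
  qed simp
  then obtain w' where w': "\<And>\<kappa>. \<kappa> \<in> D \<Longrightarrow> w \<kappa> = X * w' \<kappa>"
    by metis
  have "X \<noteq> 0"
    by (simp add: X_def)
  have "order a (w \<kappa>0) = order a X + order a (w' \<kappa>0)"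
    using \<kappa>0(2) unfolding w'[OF \<kappa>0(1)] by (rule order_mult)
  then have "order a (w' \<kappa>0) = 0"
    by (simp add: X_def order_power_n_n)
  then have "poly (w' \<kappa>0) a \<noteq> 0"
    using \<kappa>0(2) w'[OF \<kappa>0(1)] by (auto simp: order_root)
  moreover have "(\<Sum>\<kappa>\<in>D. w' \<kappa> * A \<nu> \<kappa>) = 0" if "\<nu> \<in> R" for \<nu>
  proof -
    have "X * (\<Sum>\<kappa>\<in>D. w' \<kappa> * A \<nu> \<kappa>) = (\<Sum>\<kappa>\<in>D. w \<kappa> * A \<nu> \<kappa>)"
      by (simp add: sum_distrib_left w' mult.assoc)
    then show ?thesis
      using ker that \<open>X \<noteq> 0\<close> by simp
  qed
  ultimately show ?thesis
    using \<kappa>0(1) by blast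
qed

lemma kernel_vector_specialize:
  fixes w :: "'k \<Rightarrow> 'a::idom poly" and A :: "'r \<Rightarrow> 'k \<Rightarrow> 'a poly"
  assumes "finite D" and "\<exists>\<kappa>\<in>D. w \<kappa> \<noteq> 0"
    and "\<forall>\<nu>\<in>R. (\<Sum>\<kappa>\<in>D. w \<kappa> * A \<nu> \<kappa>) = 0"
  shows "\<exists>u. (\<exists>\<kappa>\<in>D. u \<kappa> \<noteq> 0) \<and> (\<forall>\<nu>\<in>R. (\<Sum>\<kappa>\<in>D. u \<kappa> * poly (A \<nu> \<kappa>) a) = 0)"
proof -
  obtain w' where "\<exists>\<kappa>\<in>D. poly (w' \<kappa>) a \<noteq> 0" and ker: "\<forall>\<nu>\<in>R. (\<Sum>\<kappa>\<in>D. w' \<kappa> * A \<nu> \<kappa>) = 0"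
    using kernel_vector_nonvanishing_at[OF assms] by blast
  moreover have "(\<Sum>\<kappa>\<in>D. poly (w' \<kappa>) a * poly (A \<nu> \<kappa>) a) = 0" if "\<nu> \<in> R" for \<nu>
    using arg_cong[of _ _ "\<lambda>p. poly p a", OF ker[rule_format, OF that]] by (simp add: poly_sum)
  ultimately show ?thesis
    by (intro exI[of _ "\<lambda>\<kappa>. poly (w' \<kappa>) a"] conjI) blast+
qed

lemma qq_eq_to_fract: "qq = to_fract [:0, 1:]"
  by (simp add: qq_def to_fract_def)

lemma tt_eq_to_fract: "tt = to_fract [:[:0, 1:]:]"
  by (simp add: tt_def to_fract_def)

lemma tilde_monomial_eq:
  "(\<Prod>i<n. (tilde n \<nu> ! i) ^ (\<kappa>!i)) =
     qq ^ (\<Sum>i<n. \<nu>!i * \<kappa>!i) * inverse tt ^ (\<Sum>i<n. kk n \<nu> i * \<kappa>!i)"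
proof -
  have "(\<Prod>i<n. (tilde n \<nu> ! i) ^ (\<kappa>!i)) = (\<Prod>i<n. qq ^ (\<nu>!i * \<kappa>!i) * inverse tt ^ (kk n \<nu> i * \<kappa>!i))"
    by (intro prod.cong refl) (simp add: tilde_def power_mult_distrib power_mult)
  then show ?thesis
    by (simp add: prod.distrib power_sum)
qed

definition tilde_numerator :: "nat \<Rightarrow> nat \<Rightarrow> nat list \<Rightarrow> nat list \<Rightarrow> rat poly poly" where
  "tilde_numerator N n \<nu> \<kappa> =
    [:[:0, 1:] ^ (N - (\<Sum>i<n. kk n \<nu> i * \<kappa>!i)):] * [:0, 1:] ^ (\<Sum>i<n. \<nu>!i * \<kappa>!i)"

lemma tilde_monomial_clear_t:
  assumes "(\<Sum>i<n. kk n \<nu> i * \<kappa>!i) \<le> N"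
  shows "tt ^ N * (\<Prod>i<n. (tilde n \<nu> ! i) ^ (\<kappa>!i)) = to_fract (tilde_numerator N n \<nu> \<kappa>)"
proof -
  let ?T = "\<Sum>i<n. kk n \<nu> i * \<kappa>!i" and ?Q = "\<Sum>i<n. \<nu>!i * \<kappa>!i"
  have "tt \<noteq> 0"
    by (simp add: tt_eq_to_fract)
  have "tt ^ N = tt ^ (N - ?T) * tt ^ ?T"
    using assms by (simp flip: power_add)
  then have "tt ^ N * (\<Prod>i<n. (tilde n \<nu> ! i) ^ (\<kappa>!i)) = qq ^ ?Q * tt ^ (N - ?T)"
    using \<open>tt \<noteq> 0\<close> by (simp add: tilde_monomial_eq field_simps flip: power_mult_distrib)
  also have "\<dots> = to_fract (tilde_numerator N n \<nu> \<kappa>)"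
    by (simp add: tilde_numerator_def qq_eq_to_fract tt_eq_to_fract to_fract_power mult.commute
        flip: poly_const_pow)
  finally show ?thesis .
qed

lemma tilde_numerator_at_2_1:
  "poly (poly (tilde_numerator N n \<nu> \<kappa>) [:2:]) 1 = (\<Prod>i<n. (2 ^ (\<nu>!i)) ^ (\<kappa>!i))"
proof -
  have "poly (poly (tilde_numerator N n \<nu> \<kappa>) [:2:]) 1 = 2 ^ (\<Sum>i<n. \<nu>!i * \<kappa>!i)"
    by (simp add: tilde_numerator_def)
  then show ?thesis
    by (simp add: power_sum power_mult)
qed

lemma tilde_vandermonde_kernel_polynomial:
  fixes v :: "nat list \<Rightarrow> K"
  assumes fin: "finite D" and v: "\<exists>\<kappa>\<in>D. v \<kappa> \<noteq> 0"
    and ker: "\<forall>\<nu>\<in>D. (\<Sum>\<kappa>\<in>D. v \<kappa> * (\<Prod>i<n. (tilde n \<nu> ! i) ^ (\<kappa>!i))) = 0"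
  shows "\<exists>N w. (\<exists>\<kappa>\<in>D. w \<kappa> \<noteq> 0) \<and> (\<forall>\<nu>\<in>D. (\<Sum>\<kappa>\<in>D. w \<kappa> * tilde_numerator N n \<nu> \<kappa>) = 0)"
proof -
  obtain e w where e: "e \<noteq> 0" and w: "\<forall>\<kappa>\<in>D. to_fract e * v \<kappa> = to_fract (w \<kappa>)"
    using common_denominator[OF fin] by blast
  define N where "N = (\<Sum>\<nu>\<in>D. \<Sum>\<kappa>\<in>D. \<Sum>i<n. kk n \<nu> i * \<kappa>!i)"
  have "(\<Sum>i<n. kk n \<nu> i * \<kappa>!i) \<le> N" if "\<nu> \<in> D" "\<kappa> \<in> D" for \<nu> \<kappa>
    unfolding N_def using fin that
    by (intro order.trans[OF member_le_sum[of \<kappa>] member_le_sum[of \<nu>]]) auto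
  then have numerator: "tt ^ N * (\<Prod>i<n. (tilde n \<nu> ! i) ^ (\<kappa>!i)) = to_fract (tilde_numerator N n \<nu> \<kappa>)"
    if "\<nu> \<in> D" "\<kappa> \<in> D" for \<nu> \<kappa>
    using that by (intro tilde_monomial_clear_t) auto
  have "(\<Sum>\<kappa>\<in>D. w \<kappa> * tilde_numerator N n \<nu> \<kappa>) = 0" if "\<nu> \<in> D" for \<nu>
  proof -
    have "to_fract (\<Sum>\<kappa>\<in>D. w \<kappa> * tilde_numerator N n \<nu> \<kappa>) =
        (\<Sum>\<kappa>\<in>D. to_fract (w \<kappa>) * to_fract (tilde_numerator N n \<nu> \<kappa>))"
      by simp
    also have "\<dots> = (\<Sum>\<kappa>\<in>D. (to_fract e * v \<kappa>) * (tt ^ N * (\<Prod>i<n. (tilde n \<nu> ! i) ^ (\<kappa>!i))))"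
      using w numerator that by (intro sum.cong) auto
    also have "\<dots> = (to_fract e * tt ^ N) * (\<Sum>\<kappa>\<in>D. v \<kappa> * (\<Prod>i<n. (tilde n \<nu> ! i) ^ (\<kappa>!i)))"
      by (simp add: sum_distrib_left mult_ac)
    also have "\<dots> = 0"
      using ker that by simp
    finally show ?thesis
      by (simp only: to_fract_eq_0_iff)
  qed
  moreover have "\<exists>\<kappa>\<in>D. w \<kappa> \<noteq> 0"
    using w e v by (metis mult_eq_0_iff to_fract_0 to_fract_eq_0_iff)
  ultimately show ?thesis
    by blast
qed

lemma tilde_vandermonde_kernel:
  fixes v :: "nat list \<Rightarrow> K"
  assumes fin: "finite D" and lower: "lower_set D" and len: "\<forall>\<nu>\<in>D. length \<nu> = n"
    and ker: "\<forall>\<nu>\<in>D. (\<Sum>\<kappa>\<in>D. v \<kappa> * (\<Prod>i<n. (tilde n \<nu> ! i) ^ (\<kappa>!i))) = 0"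
  shows "\<forall>\<kappa>\<in>D. v \<kappa> = 0"
proof (rule ccontr)
  assume "\<not> (\<forall>\<kappa>\<in>D. v \<kappa> = 0)"
  then obtain N w where w: "\<exists>\<kappa>\<in>D. w \<kappa> \<noteq> 0"
    and ker_w: "\<forall>\<nu>\<in>D. (\<Sum>\<kappa>\<in>D. w \<kappa> * tilde_numerator N n \<nu> \<kappa>) = 0"
    using tilde_vandermonde_kernel_polynomial[OF fin _ ker] by blast
  \<comment> \<open>Specialize \<open>q := 2\<close> and then \<open>t := 1\<close>; this turns \<open>tilde n \<nu>\<close> into
    \<open>(2^\<nu>\<^sub>1, \<dots>, 2^\<nu>\<^sub>n)\<close>.\<close>
  obtain u where u: "\<exists>\<kappa>\<in>D. u \<kappa> \<noteq> 0"
    and ker_u: "\<forall>\<nu>\<in>D. (\<Sum>\<kappa>\<in>D. u \<kappa> * poly (tilde_numerator N n \<nu> \<kappa>) [:2:]) = 0"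
    using kernel_vector_specialize[OF fin w ker_w, of "[:2:]"] by blast
  obtain u' where u': "\<exists>\<kappa>\<in>D. u' \<kappa> \<noteq> 0"
    and "\<forall>\<nu>\<in>D. (\<Sum>\<kappa>\<in>D. u' \<kappa> * poly (poly (tilde_numerator N n \<nu> \<kappa>) [:2:]) 1) = 0"
    using kernel_vector_specialize[OF fin u ker_u, of 1] by blast
  then have "\<forall>\<nu>\<in>D. (\<Sum>\<kappa>\<in>D. u' \<kappa> * (\<Prod>i<n. (2 ^ (\<nu>!i)) ^ (\<kappa>!i))) = 0"
    by (simp only: tilde_numerator_at_2_1)
  moreover have "inj (\<lambda>a::nat. (2::rat) ^ a)"
    by (auto simp: inj_on_def)
  ultimately have "\<forall>\<kappa>\<in>D. u' \<kappa> = 0"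
    using lower_set_vandermonde_kernel[OF _ fin lower len] by blast
  then show False
    using u' by simp
qed

lemma (in vector_space) linear_inj_on_span_imp_surj_on:
  assumes lin: "Vector_Spaces.linear scale scale f" and fin: "finite B" and maps: "f ` B \<subseteq> span B"
    and inj: "inj_on f (span B)"
  shows "f ` span B = span B"
proof -
  interpret lf: Vector_Spaces.linear scale scale f by fact
  obtain A where A: "A \<subseteq> B" "independent A" "B \<subseteq> span A"
    by (rule maximal_independent_subset)
  have "finite A"
    using A(1) fin by (rule finite_subset)
  have span_A: "span A = span B"
    using A by (simp add: span_eq span_superset[THEN subset_trans[OF A(1)]])
  have fA: "f ` A \<subseteq> span A"
    using A(1) maps span_A by auto
  have indep: "independent (f ` A)"
    using inj span_A by (intro lf.independent_injective_image A(2)) simp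
  have "x \<in> span (f ` A)" if x: "x \<in> span A" for x
  proof (rule ccontr)
    assume x_notin: "x \<notin> span (f ` A)"
    then have "independent (insert x (f ` A))"
      using indep by (rule independent_insertI)
    moreover have "insert x (f ` A) \<subseteq> span A"
      using x fA by blast
    ultimately have "card (insert x (f ` A)) \<le> card A"
      using independent_span_bound[OF \<open>finite A\<close>] by blast
    moreover have "x \<notin> f ` A"
      using x_notin span_base by blast
    moreover have "card (f ` A) = card A"
      using inj span_A A(1) span_superset by (intro card_image inj_on_subset[OF inj]) auto
    ultimately show False
      using \<open>finite A\<close> by simp
  qed
  then have "span A \<subseteq> span (f ` A)" ..
  moreover have "span (f ` A) \<subseteq> span A"
    using fA by (intro span_minimal subspace_span)
  ultimately show ?thesis
    using span_A lf.span_image by auto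
qed

interpretation PS: vector_space pscale
  by unfold_locales (auto simp: pscale_def fun_eq_iff algebra_simps)

interpretation peval: additive "\<lambda>f. peval n d f x" for n d x
  by unfold_locales (simp add: peval_def sum.distrib distrib_right)

lemma peval_pscale: "peval n d (pscale c f) x = c * peval n d f x"
  by (simp add: peval_def pscale_def sum_distrib_left mult.assoc)

lemma sum_apply: "(\<Sum>a\<in>A. h a) x = (\<Sum>a\<in>A. h a x)"
  for h :: "'i \<Rightarrow> 'k \<Rightarrow> 'b::comm_monoid_add"
  by (induction A rule: infinite_finite_induct) auto

lemma finite_comps: "finite (comps n d)"
proof (rule finite_subset)
  show "comps n d \<subseteq> {xs. set xs \<subseteq> {..d} \<and> length xs = n}"
    by (auto simp: comps_def dest: member_le_sum_list)
qed (simp add: finite_lists_length_eq)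

lemma subspace_polys: "PS.subspace (polys n d)"
  unfolding PS.subspace_def polys_def pscale_def by (auto, metis add.left_neutral)

lemma span_monomials_eq_polys:
  "PS.span ((\<lambda>\<kappa> \<mu>. if \<mu> = \<kappa> then 1 else 0) ` comps n d) = polys n d"
proof (rule PS.span_subspace[OF _ _ subspace_polys])
  show "(\<lambda>\<kappa> \<mu>. if \<mu> = \<kappa> then 1 else 0) ` comps n d \<subseteq> polys n d"
    by (auto simp: polys_def split: if_splits)
  show "polys n d \<subseteq> PS.span ((\<lambda>\<kappa> \<mu>. if \<mu> = \<kappa> then 1 else 0) ` comps n d)"
  proof
    fix f assume f: "f \<in> polys n d"
    have "f = (\<Sum>\<kappa>\<in>comps n d. pscale (f \<kappa>) (\<lambda>\<mu>. if \<mu> = \<kappa> then 1 else 0))"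
      using f finite_comps
      by (auto simp: fun_eq_iff sum_apply pscale_def polys_def if_distrib sum.delta' cong: if_cong)
    also have "\<dots> \<in> PS.span ((\<lambda>\<kappa> \<mu>. if \<mu> = \<kappa> then 1 else 0) ` comps n d)"
      by (intro PS.span_sum PS.span_scale PS.span_base) auto
    finally show "f \<in> PS.span ((\<lambda>\<kappa> \<mu>. if \<mu> = \<kappa> then 1 else 0) ` comps n d)" .
  qed
qed

lemma lower_set_comps: "lower_set (comps n d)"
  using sum_list_le_if_in_box by (fastforce simp: lower_set_def comps_def box_def)

lemma lower_set_comps_remove_top:
  assumes "sum_list \<mu> = d"
  shows "lower_set (comps n d - {\<mu>})"
  using lower_set_comps assms eq_if_box_sum_list_le
  by (fastforce simp: lower_set_def comps_def)

lemma vanishing_at_tilde_on_lower_set_imp_0: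
  assumes lower: "lower_set D" and D: "D \<subseteq> comps n d"
    and supp: "\<And>\<kappa>. \<kappa> \<notin> D \<Longrightarrow> f \<kappa> = 0"
    and vanish: "\<And>\<nu>. \<nu> \<in> D \<Longrightarrow> peval n d f (tilde n \<nu>) = 0"
  shows "f = 0"
proof -
  have "finite D"
    using D finite_comps by (rule finite_subset)
  have "peval n d f (tilde n \<nu>) = (\<Sum>\<kappa>\<in>D. f \<kappa> * (\<Prod>i<n. (tilde n \<nu> ! i) ^ (\<kappa>!i)))" for \<nu>
    unfolding peval_def using D supp by (intro sum.mono_neutral_right finite_comps) auto
  then have ker: "\<forall>\<nu>\<in>D. (\<Sum>\<kappa>\<in>D. f \<kappa> * (\<Prod>i<n. (tilde n \<nu> ! i) ^ (\<kappa>!i))) = 0"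
    using vanish by simp
  have "\<forall>\<nu>\<in>D. length \<nu> = n"
    using D by (auto simp: comps_def)
  then have "\<forall>\<kappa>\<in>D. f \<kappa> = 0"
    using tilde_vandermonde_kernel[OF \<open>finite D\<close> lower _ ker] by blast
  then show ?thesis
    using supp by fastforce
qed

lemma vanishing_at_tilde_imp_0:
  assumes "f \<in> polys n d" and "\<And>\<nu>. \<nu> \<in> comps n d \<Longrightarrow> peval n d f (tilde n \<nu>) = 0"
  shows "f = 0"
  by (rule vanishing_at_tilde_on_lower_set_imp_0[OF lower_set_comps order.refl])
    (use assms in \<open>auto simp: polys_def\<close>)

lemma vanishing_at_tilde_except_top_imp_0:
  assumes "sum_list \<mu> = d" and "f \<in> polys n d" and "f \<mu> = 0"
    and "\<And>\<nu>. \<nu> \<in> comps n d \<Longrightarrow> \<nu> \<noteq> \<mu> \<Longrightarrow> peval n d f (tilde n \<nu>) = 0"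
  shows "f = 0"
  by (rule vanishing_at_tilde_on_lower_set_imp_0[OF lower_set_comps_remove_top])
    (use assms in \<open>auto simp: polys_def\<close>)

lemma ex_interpolant_at_tilde:
  assumes "\<nu>0 \<in> comps n d"
  shows "\<exists>g\<in>polys n d. \<forall>\<nu>\<in>comps n d. peval n d g (tilde n \<nu>) = (if \<nu> = \<nu>0 then 1 else 0)"
proof -
  \<comment> \<open>The values at the points \<open>tilde n \<nu>\<close> are again indexed by \<open>comps n d\<close>, so evaluation is
    an injective endomorphism of \<open>polys n d\<close>, hence onto.\<close>
  define \<Phi> where "\<Phi> f = (\<lambda>\<nu>. if \<nu> \<in> comps n d then peval n d f (tilde n \<nu>) else 0)" for f
  define B :: "(nat list \<Rightarrow> K) set" where "B = (\<lambda>\<kappa> \<mu>. if \<mu> = \<kappa> then 1 else 0) ` comps n d"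
  have "Vector_Spaces.linear pscale pscale \<Phi>"
    by (auto simp: Vector_Spaces.linear_iff PS.vector_space_axioms \<Phi>_def fun_eq_iff
        peval.add peval_pscale[unfolded pscale_def] pscale_def)
  moreover have "\<Phi> f \<in> polys n d" for f
    by (simp add: \<Phi>_def polys_def)
  moreover have "inj_on \<Phi> (polys n d)"
  proof (rule inj_onI)
    fix f g assume "f \<in> polys n d" "g \<in> polys n d" "\<Phi> f = \<Phi> g"
    then have "f - g = 0"
      by (intro vanishing_at_tilde_imp_0 PS.subspace_diff[OF subspace_polys])
        (auto simp: \<Phi>_def fun_eq_iff peval.diff split: if_splits)
    then show "f = g"
      by simp
  qed
  ultimately have "\<Phi> ` polys n d = polys n d"
    using PS.linear_inj_on_span_imp_surj_on[of \<Phi> B] finite_comps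
    by (auto simp: B_def span_monomials_eq_polys)
  moreover have "(\<lambda>\<nu>. if \<nu> = \<nu>0 then 1 else 0) \<in> polys n d"
    using assms by (simp add: polys_def)
  ultimately have "(\<lambda>\<nu>. if \<nu> = \<nu>0 then 1 else 0) \<in> \<Phi> ` polys n d"
    by simp
  then obtain g where "g \<in> polys n d" "(\<lambda>\<nu>. if \<nu> = \<nu>0 then 1 else 0) = \<Phi> g"
    by (rule imageE)
  then show ?thesis
    by (auto simp: \<Phi>_def fun_eq_iff split: if_splits)
qed

lemma ex1_Estar:
  assumes "length \<mu> = n"
  shows "\<exists>!f. f \<in> polys n (sum_list \<mu>) \<and> f \<mu> = 1 \<and>
    (\<forall>\<nu>. length \<nu> = n \<and> sum_list \<nu> \<le> sum_list \<mu> \<and> \<nu> \<noteq> \<mu> \<longrightarrow> peval n (sum_list \<mu>) f (tilde n \<nu>) = 0)"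
    (is "\<exists>!f. ?E f")
proof -
  define d where "d = sum_list \<mu>"
  have \<mu>: "\<mu> \<in> comps n d"
    using assms by (simp add: comps_def d_def)
  have E_iff: "?E f \<longleftrightarrow> f \<in> polys n d \<and> f \<mu> = 1 \<and>
      (\<forall>\<nu>\<in>comps n d. \<nu> \<noteq> \<mu> \<longrightarrow> peval n d f (tilde n \<nu>) = 0)" for f
    by (auto simp: comps_def d_def)
  obtain g where g: "g \<in> polys n d"
    and g_tilde: "\<And>\<nu>. \<nu> \<in> comps n d \<Longrightarrow> peval n d g (tilde n \<nu>) = (if \<nu> = \<mu> then 1 else 0)"
    using ex_interpolant_at_tilde[OF \<mu>] by blast
  have "g \<mu> \<noteq> 0"
  proof
    assume "g \<mu> = 0"
    then have "g = 0"
      using g g_tilde by (intro vanishing_at_tilde_except_top_imp_0[of \<mu>]) (auto simp: d_def)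
    then show False
      using g_tilde[OF \<mu>] by (simp add: peval.zero)
  qed
  then have "?E (pscale (inverse (g \<mu>)) g)"
    unfolding E_iff using g g_tilde PS.subspace_scale[OF subspace_polys]
    by (simp add: peval_pscale) (simp add: pscale_def)
  moreover have "f1 = f2" if "?E f1" "?E f2" for f1 f2
  proof -
    have "f1 - f2 = 0"
      using that PS.subspace_diff[OF subspace_polys]
      by (intro vanishing_at_tilde_except_top_imp_0[of \<mu>]) (auto simp: E_iff d_def peval.diff)
    then show ?thesis
      by simp
  qed
  ultimately show ?thesis
    by blast
qed

lemma
  assumes "length \<mu> = n"
  shows Estar_in_polys: "Estar n \<mu> \<in> polys n (sum_list \<mu>)"
    and Estar_self: "Estar n \<mu> \<mu> = 1"
    and peval_Estar_tilde: "\<And>\<nu>. length \<nu> = n \<Longrightarrow> sum_list \<nu> \<le> sum_list \<mu> \<Longrightarrow> \<nu> \<noteq> \<mu> \<Longrightarrow>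
      peval n (sum_list \<mu>) (Estar n \<mu>) (tilde n \<nu>) = 0"
  using theI'[OF ex1_Estar[OF assms]] unfolding Estar_def by blast+

lemma peval_Estar_tilde_self:
  assumes "length \<mu> = n"
  shows "peval n (sum_list \<mu>) (Estar n \<mu>) (tilde n \<mu>) \<noteq> 0"
proof
  assume "peval n (sum_list \<mu>) (Estar n \<mu>) (tilde n \<mu>) = 0"
  then have "Estar n \<mu> = 0"
    using assms Estar_in_polys peval_Estar_tilde
    by (intro vanishing_at_tilde_imp_0) (auto simp: comps_def)
  then show False
    using Estar_self[OF assms] by simp
qed

lemma rearr_length_sum_list:
  assumes "\<mu> \<in> rearr lam"
  shows "length \<mu> = length lam" and "sum_list \<mu> = sum_list lam"
  using assms by (auto simp: rearr_def dest: mset_eq_length simp flip: sum_mset_sum_list)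

lemma subspace_Vstar: "PS.subspace (Vstar n lam)"
  using subspace_polys[of n "sum_list lam"]
  by (auto simp: PS.subspace_def Vstar_def peval.add peval.zero peval_pscale)

lemma Estar_in_Vstar:
  assumes "length lam = n" and "\<mu> \<in> rearr lam"
  shows "Estar n \<mu> \<in> Vstar n lam"
proof -
  have \<mu>: "length \<mu> = n" "sum_list \<mu> = sum_list lam"
    using rearr_length_sum_list[OF assms(2)] assms(1) by simp_all
  have "peval n (sum_list lam) (Estar n \<mu>) (tilde n \<nu>) = 0"
    if "length \<nu> = n" "sum_list \<nu> \<le> sum_list lam" "\<nu> \<notin> rearr lam" for \<nu>
    using peval_Estar_tilde[OF \<mu>(1) that(1)] that assms(2) \<mu>(2) by auto
  then show ?thesis
    using Estar_in_polys[OF \<mu>(1)] \<mu>(2) by (simp add: Vstar_def)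
qed

lemma peval_tilde_Estar_sum:
  assumes R: "R \<subseteq> {\<mu>. length \<mu> = n \<and> sum_list \<mu> = d}" and \<nu>: "\<nu> \<in> comps n d"
  shows "peval n d (\<Sum>\<mu>\<in>R. pscale (a \<mu> / peval n d (Estar n \<mu>) (tilde n \<mu>)) (Estar n \<mu>)) (tilde n \<nu>) =
    (if \<nu> \<in> R then a \<nu> else 0)"
proof -
  have "R \<subseteq> comps n d"
    using R by (auto simp: comps_def)
  then have "finite R"
    using finite_comps by (rule finite_subset)
  have "peval n d (\<Sum>\<mu>\<in>R. pscale (a \<mu> / peval n d (Estar n \<mu>) (tilde n \<mu>)) (Estar n \<mu>)) (tilde n \<nu>) =
      (\<Sum>\<mu>\<in>R. a \<mu> / peval n d (Estar n \<mu>) (tilde n \<mu>) * peval n d (Estar n \<mu>) (tilde n \<nu>))"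
    by (simp add: peval.sum peval_pscale)
  also have "\<dots> = (\<Sum>\<mu>\<in>R. if \<mu> = \<nu> then a \<nu> else 0)"
  proof (rule sum.cong[OF refl])
    fix \<mu> assume "\<mu> \<in> R"
    then have \<mu>: "length \<mu> = n" "sum_list \<mu> = d"
      using R by auto
    show "a \<mu> / peval n d (Estar n \<mu>) (tilde n \<mu>) * peval n d (Estar n \<mu>) (tilde n \<nu>) =
        (if \<mu> = \<nu> then a \<nu> else 0)"
      using peval_Estar_tilde_self[OF \<mu>(1)] peval_Estar_tilde[OF \<mu>(1), of \<nu>] \<mu> \<nu>
      by (auto simp: comps_def)
  qed
  also have "\<dots> = (if \<nu> \<in> R then a \<nu> else 0)"
    using \<open>finite R\<close> by (simp add: sum.delta)
  finally show ?thesis .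
qed

lemma Vstar_eq_Estar_expansion:
  assumes len: "length lam = n" and f: "f \<in> Vstar n lam"
  defines "d \<equiv> sum_list lam"
  shows "f = (\<Sum>\<mu>\<in>rearr lam.
    pscale (peval n d f (tilde n \<mu>) / peval n d (Estar n \<mu>) (tilde n \<mu>)) (Estar n \<mu>))"
    (is "f = ?s")
proof -
  have R: "rearr lam \<subseteq> {\<mu>. length \<mu> = n \<and> sum_list \<mu> = d}"
    using rearr_length_sum_list len by (auto simp: d_def)
  then have "?s \<in> polys n d"
    using Estar_in_polys
    by (intro PS.subspace_sum[OF subspace_polys] PS.subspace_scale[OF subspace_polys]) force
  moreover have "f \<in> polys n d"
    using f by (simp add: Vstar_def d_def)
  moreover have "peval n d ?s (tilde n \<nu>) = peval n d f (tilde n \<nu>)" if "\<nu> \<in> comps n d" for \<nu>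
    using peval_tilde_Estar_sum[OF R that] f that by (auto simp: Vstar_def comps_def d_def)
  ultimately have "f - ?s = 0"
    by (intro vanishing_at_tilde_imp_0 PS.subspace_diff[OF subspace_polys]) (auto simp: peval.diff)
  then show ?thesis
    by simp
qed

theorem lemma2p5:
  fixes n :: nat and lam :: "nat list"
  assumes "is_partition n lam"
  shows "Vstar n lam = module.span pscale (Estar n ` rearr lam)"
proof
  have len: "length lam = n"
    using assms by (simp add: is_partition_def)
  show "PS.span (Estar n ` rearr lam) \<subseteq> Vstar n lam"
    using Estar_in_Vstar[OF len] by (intro PS.span_minimal subspace_Vstar) auto
  show "Vstar n lam \<subseteq> PS.span (Estar n ` rearr lam)"
  proof
    fix f assume "f \<in> Vstar n lam"
    then have "f = (\<Sum>\<mu>\<in>rearr lam. pscale (peval n (sum_list lam) f (tilde n \<mu>) /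
        peval n (sum_list lam) (Estar n \<mu>) (tilde n \<mu>)) (Estar n \<mu>))"
      by (rule Vstar_eq_Estar_expansion[OF len])
    also have "\<dots> \<in> PS.span (Estar n ` rearr lam)"
      by (intro PS.span_sum PS.span_scale PS.span_base imageI)
    finally show "f \<in> PS.span (Estar n ` rearr lam)" .
  qed
qed

end
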